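(* Let $q$ be a prime power and $n\ge 3$. There does not exist a Cameron-Liebler line class of $\mathrm{AG}(n,q)$ with parameter $x=2$.
   Context: $\mathrm{AG}(n,q)$ is $\mathrm{PG}(n,q)$ with a hyperplane $\pi_\infty$ removed; affine points are points outside $\pi_\infty$, affine lines are projective lines not contained in $\pi_\infty$. With $A_n$ the incidence matrix of affine points versus affine lines, a set $\mathcal{L}$ of affine lines is a Cameron-Liebler line class of $\mathrm{AG}(n,q)$ if its characteristic vector lies in the real row space $\mathrm{Im}(A_n^T)$; its parameter is $|\mathcal{L}|(q-1)/(q^n-1)$. *)

theory Defs
  imports Complex_Main
begin

text \<open>AG(n,q): points are functions 'n \<Rightarrow> 'k where 'k is a finite field of order q
  and n = card (UNIV :: 'n set). Affine lines are the sets {p + t d | t \<in> 'k} with d \<noteq> 0.\<close>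

definition affine_line :: "('n \<Rightarrow> 'k::field) \<Rightarrow> ('n \<Rightarrow> 'k) \<Rightarrow> ('n \<Rightarrow> 'k) set" where
  "affine_line p d = {(\<lambda>i. p i + t * d i) | t. True}"

definition affine_lines :: "('n::finite \<Rightarrow> 'k::field) set set" where
  "affine_lines = {affine_line p d | p d. \<exists>i. d i \<noteq> 0}"

text \<open>Characteristic vector of L (indexed by affine lines) lies in the real row space
  Im(A^T) of the point-line incidence matrix A: \<chi>_L = A^T y for some real vector y
  indexed by points, i.e. \<chi>_L(l) = \<Sum>_{P \<in> l} y(P).\<close>

definition is_CL_line_class :: "('n::finite \<Rightarrow> 'k::{finite,field}) set set \<Rightarrow> bool" where
  "is_CL_line_class L \<longleftrightarrow> L \<subseteq> affine_lines \<and>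
     (\<exists>y :: ('n \<Rightarrow> 'k) \<Rightarrow> real. \<forall>l \<in> affine_lines.
        (if l \<in> L then 1 else 0) = (\<Sum>P\<in>l. y P))"

definition CL_parameter :: "('n::finite \<Rightarrow> 'k::{finite,field}) set set \<Rightarrow> real" where
  "CL_parameter L = real (card L) * (real (card (UNIV :: 'k set)) - 1) / (real (card (UNIV :: 'k set)) ^ card (UNIV :: 'n set) - 1)"

end

theory Submission
  imports Defs "HOL-Library.Function_Algebras" "HOL-Library.Cardinality"
begin

text \<open>Summing the identity \<chi>_L(l) = \<Sum>_{P \<in> l} y(P) over the lines of direction d inside a flat F
  having d among its directions shows that exactly \<Sum>_{P \<in> F} y(P) lines of L with direction d
  lie in F, whatever the direction d of F; for F the whole space a double count identifies this
  number with the parameter x. Now let x = 2. If the two lines of L of one direction of F lie in F,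
  then F contains the two lines of L of each of its directions. This applies to the plane \<pi>
  spanned by the two lines of L of some direction, and then to the 3-space \<sigma> spanned by \<pi> and a
  direction e not in \<pi> (here n \<ge> 3 is used). So the plane \<pi>' spanned by the two lines of L of
  direction e lies in \<sigma> and shares a direction f with \<pi>. The two lines of L of direction f lie in
  both planes and span each of them, so \<pi> and \<pi>' have the same directions, contradicting
  e \<notin> \<pi>.\<close>

lemma (in finite_dimensional_vector_space) subspace_Int_nonzero:
  assumes "subspace S" "subspace T" "subspace U" "S \<subseteq> U" "T \<subseteq> U" "dim U < dim S + dim T"
  obtains x where "x \<in> S" "x \<in> T" "x \<noteq> 0"
proof -
  have "{x + y |x y. x \<in> S \<and> y \<in> T} \<subseteq> U"
    using assms(3-5) subspace_add by blast
  then have "dim {x + y |x y. x \<in> S \<and> y \<in> T} \<le> dim U"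
    by (rule dim_subset)
  then have "dim (S \<inter> T) \<noteq> 0"
    using dim_sums_Int[OF assms(1,2)] assms(6) by linarith
  then show ?thesis
    using that by auto
qed

definition scale_fun :: "'k::field \<Rightarrow> ('n \<Rightarrow> 'k) \<Rightarrow> ('n \<Rightarrow> 'k)" where
  "scale_fun c f = (\<lambda>i. c * f i)"

definition unit_fun :: "'n \<Rightarrow> 'n \<Rightarrow> 'k::field" where
  "unit_fun j = (\<lambda>i. if i = j then 1 else 0)"

lemma scale_fun_apply [simp]: "scale_fun c f i = c * f i"
  by (simp add: scale_fun_def)

lemma sum_fun_apply: "sum f A x = (\<Sum>a\<in>A. f a x)"
  by (induction A rule: infinite_finite_induct) auto

lemma sum_unit_fun_expansion:
  "(\<Sum>j\<in>UNIV. scale_fun (c j) (unit_fun j)) = (c :: 'n::finite \<Rightarrow> 'k::field)"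
  by (auto simp: fun_eq_iff sum_fun_apply unit_fun_def if_distrib cong: if_cong)

lemma inj_unit_fun: "inj (unit_fun :: 'n \<Rightarrow> 'n \<Rightarrow> 'k::field)"
  by (auto simp: inj_def unit_fun_def fun_eq_iff split: if_splits)

interpretation fvs: vector_space "scale_fun :: 'k::field \<Rightarrow> ('n \<Rightarrow> 'k) \<Rightarrow> _"
  by unfold_locales (auto simp: fun_eq_iff algebra_simps)

interpretation fvs: finite_dimensional_vector_space "scale_fun :: 'k::field \<Rightarrow> ('n::finite \<Rightarrow> 'k) \<Rightarrow> _"
  "range unit_fun"
proof
  show fin: "finite (range (unit_fun :: 'n \<Rightarrow> 'n \<Rightarrow> 'k))" by simp
  show "fvs.independent (range (unit_fun :: 'n \<Rightarrow> 'n \<Rightarrow> 'k))"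
  proof
    assume "fvs.dependent (range (unit_fun :: 'n \<Rightarrow> 'n \<Rightarrow> 'k))"
    then obtain u where u: "\<exists>v\<in>range unit_fun. u v \<noteq> 0"
      "(\<Sum>v\<in>range (unit_fun :: 'n \<Rightarrow> 'n \<Rightarrow> 'k). scale_fun (u v) v) = 0"
      using fvs.dependent_finite[OF fin] by blast
    have "(\<lambda>j. u (unit_fun j)) = 0"
      using u(2) sum_unit_fun_expansion[of "\<lambda>j. u (unit_fun j)"]
      by (simp add: sum.reindex[OF inj_unit_fun])
    then show False using u(1) by (auto simp: fun_eq_iff)
  qed
  show "fvs.span (range (unit_fun :: 'n \<Rightarrow> 'n \<Rightarrow> 'k)) = UNIV"
  proof -
    have "f \<in> fvs.span (range unit_fun)" for f :: "'n \<Rightarrow> 'k"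
      using fvs.span_sum[of UNIV "\<lambda>j. scale_fun (f j) (unit_fun j)"] sum_unit_fun_expansion[of f]
      by (metis fvs.span_base fvs.span_scale rangeI)
    then show ?thesis by blast
  qed
qed

lemma fvs_dim_UNIV: "fvs.dim (UNIV :: ('n::finite \<Rightarrow> 'k::field) set) = CARD('n)"
  by (simp add: card_image[OF inj_unit_fun])

lemma mem_affine_line_iff: "x \<in> affine_line p d \<longleftrightarrow> (\<exists>t. x = p + scale_fun t d)"
  by (auto simp: affine_line_def fun_eq_iff)

lemma base_mem_affine_line: "p \<in> affine_line p d"
  unfolding mem_affine_line_iff by (rule exI[of _ 0]) (simp add: fun_eq_iff)

lemma affine_line_eq_if_mem:
  assumes "x \<in> affine_line p d"
  shows "affine_line x d = affine_line p d"
proof -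
  obtain t where t: "x = p + scale_fun t d"
    using assms mem_affine_line_iff by blast
  have "(\<exists>s. z = x + scale_fun s d) \<longleftrightarrow> (\<exists>s. z = p + scale_fun s d)" for z
    by (metis (no_types) t add.assoc add_diff_cancel fvs.scale_left_distrib fvs.scale_left_diff_distrib
        add.commute diff_add_cancel)
  then show ?thesis by (auto simp: mem_affine_line_iff)
qed

lemma affine_line_scale:
  assumes "t \<noteq> 0"
  shows "affine_line p (scale_fun t d) = affine_line p d"
proof -
  have "(\<exists>s. z = p + scale_fun s (scale_fun t d)) \<longleftrightarrow> (\<exists>s. z = p + scale_fun s d)" for z
    by (metis assms fvs.scale_scale divide_inverse_commute inverse_divide nonzero_divide_eq_eq)
  then show ?thesis by (auto simp: mem_affine_line_iff)
qed

lemma affine_line_eq_imp_direction: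
  assumes "affine_line p d = affine_line a v"
  shows "\<exists>t. d = scale_fun t v"
proof -
  have "p \<in> affine_line a v" "p + scale_fun 1 d \<in> affine_line a v"
    using assms base_mem_affine_line[of p d] mem_affine_line_iff[of _ p d] by blast+
  then obtain s s' where "p = a + scale_fun s v" "p + scale_fun 1 d = a + scale_fun s' v"
    unfolding mem_affine_line_iff by blast
  then have "d = scale_fun (s' - s) v"
    by (simp add: fun_eq_iff algebra_simps)
  then show ?thesis ..
qed

lemma diff_notin_span_if_affine_line_neq:
  assumes "affine_line a d \<noteq> affine_line b d"
  shows "b - a \<notin> fvs.span {d}"
proof
  assume "b - a \<in> fvs.span {d}"
  then obtain t where "b - a = scale_fun t d"
    unfolding fvs.span_singleton by blast
  then have "b \<in> affine_line a d"
    unfolding mem_affine_line_iff by (metis add.commute diff_add_cancel)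
  then show False
    using assms affine_line_eq_if_mem by metis
qed

lemma affine_line_in_affine_lines:
  "(d :: 'n::finite \<Rightarrow> 'k::field) \<noteq> 0 \<Longrightarrow> affine_line p d \<in> affine_lines"
  by (auto simp: affine_lines_def fun_eq_iff)

lemma affine_linesE:
  assumes "l \<in> affine_lines"
  obtains p d where "d \<noteq> 0" "l = affine_line p d"
  using assms by (auto simp: affine_lines_def fun_eq_iff)

definition flat :: "('n \<Rightarrow> 'k::field) \<Rightarrow> ('n \<Rightarrow> 'k) set \<Rightarrow> ('n \<Rightarrow> 'k) set" where
  "flat p W = (+) p ` W"

lemma flat_UNIV: "flat p UNIV = UNIV"
  by (auto simp: flat_def image_iff intro: exI[of _ "x - p" for x])

lemma flat_mono: "W \<subseteq> W' \<Longrightarrow> flat p W \<subseteq> flat p W'"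
  by (auto simp: flat_def)

lemma add_mem_flat: "w \<in> W \<Longrightarrow> p + w \<in> flat p W"
  by (simp add: flat_def)

lemma base_mem_flat: "fvs.subspace W \<Longrightarrow> p \<in> flat p W"
  by (metis add_mem_flat add.right_neutral fvs.subspace_0)

lemma diff_mem_flat: "fvs.subspace W \<Longrightarrow> a \<in> flat p W \<Longrightarrow> b \<in> flat p W \<Longrightarrow> b - a \<in> W"
  by (auto simp: flat_def intro: fvs.subspace_diff)

lemma affine_line_subset_flat:
  assumes "fvs.subspace W" "d \<in> W" "a \<in> flat p W"
  shows "affine_line a d \<subseteq> flat p W"
proof
  fix x assume "x \<in> affine_line a d"
  then obtain t w where "x = a + scale_fun t d" "a = p + w" "w \<in> W"
    using assms(3) by (auto simp: mem_affine_line_iff flat_def)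
  then show "x \<in> flat p W"
    using add_mem_flat[of "w + scale_fun t d" W p] assms(1,2)
    by (simp add: add.assoc fvs.subspace_add fvs.subspace_scale)
qed

definition parallel_lines :: "('n \<Rightarrow> 'k::field) set \<Rightarrow> ('n \<Rightarrow> 'k) \<Rightarrow> ('n \<Rightarrow> 'k) set set" where
  "parallel_lines F d = (\<lambda>p. affine_line p d) ` F"

lemma affine_line_in_parallel_lines: "p \<in> F \<Longrightarrow> affine_line p d \<in> parallel_lines F d"
  by (simp add: parallel_lines_def)

lemma parallel_lines_mono: "F \<subseteq> G \<Longrightarrow> parallel_lines F d \<subseteq> parallel_lines G d"
  by (auto simp: parallel_lines_def)

lemma directions_of_affine_line:
  assumes "d \<noteq> 0"
  shows "{v. v \<noteq> 0 \<and> affine_line p d \<in> parallel_lines UNIV v} =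
    (\<lambda>t. scale_fun t d) ` (UNIV - {0})"
proof (intro set_eqI iffI)
  fix v assume "v \<in> {v. v \<noteq> 0 \<and> affine_line p d \<in> parallel_lines UNIV v}"
  then obtain a where "v \<noteq> 0" "affine_line a v = affine_line p d"
    by (auto simp: parallel_lines_def)
  then obtain t where "v = scale_fun t d" "t \<noteq> 0"
    using affine_line_eq_imp_direction fvs.scale_zero_left by metis
  then show "v \<in> (\<lambda>t. scale_fun t d) ` (UNIV - {0})" by blast
next
  fix v assume "v \<in> (\<lambda>t. scale_fun t d) ` (UNIV - {0})"
  then obtain t where "t \<noteq> 0" "v = scale_fun t d" by blast
  then show "v \<in> {v. v \<noteq> 0 \<and> affine_line p d \<in> parallel_lines UNIV v}"
    using assms affine_line_scale[of t p d] by (auto simp: parallel_lines_def)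
qed

lemma card_directions_of_affine_line:
  fixes d :: "'n \<Rightarrow> 'k::{finite,field}"
  assumes "d \<noteq> 0"
  shows "card {v. v \<noteq> 0 \<and> affine_line p d \<in> parallel_lines UNIV v} = CARD('k) - 1"
proof -
  have "inj_on (\<lambda>t. scale_fun t d) (UNIV - {0})"
    using assms by (auto simp: inj_on_def)
  then show ?thesis
    by (simp add: directions_of_affine_line[OF assms] card_image card_Diff_subset)
qed

lemma sum_over_parallel_lines:
  fixes F :: "('n::finite \<Rightarrow> 'k::{finite,field}) set" and y :: "('n \<Rightarrow> 'k) \<Rightarrow> 'a::comm_monoid_add"
  assumes "\<And>p. p \<in> F \<Longrightarrow> affine_line p d \<subseteq> F"
  shows "(\<Sum>l\<in>parallel_lines F d. sum y l) = sum y F"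
proof -
  have "\<Union>(parallel_lines F d) = F"
    using assms base_mem_affine_line by (fastforce simp: parallel_lines_def)
  moreover have "A \<inter> B = {}"
    if AB: "A \<in> parallel_lines F d" "B \<in> parallel_lines F d" "A \<noteq> B" for A B
  proof -
    obtain a b where "A = affine_line a d" "B = affine_line b d"
      using AB(1,2) by (auto simp: parallel_lines_def)
    then show ?thesis
      using AB(3) affine_line_eq_if_mem by blast
  qed
  ultimately show ?thesis
    using sum.Union_disjoint[of "parallel_lines F d" y] by simp
qed

lemma two_parallel_linesE:
  assumes "card A = 2" "A \<subseteq> parallel_lines F d"
  obtains a b where "a \<in> F" "b \<in> F" "affine_line a d \<noteq> affine_line b d"
    "A = {affine_line a d, affine_line b d}"
proof -
  obtain l1 l2 where "A = {l1, l2}" "l1 \<noteq> l2"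
    using assms(1) card_2_iff by metis
  with assms(2) show ?thesis
    using that by (auto simp: parallel_lines_def)
qed

lemma subspace_subset_if_flats_share_parallel_lines:
  fixes f :: "'n::finite \<Rightarrow> 'k::field"
  assumes P: "fvs.subspace P" "f \<in> P" and Q: "fvs.subspace Q" "f \<in> Q" "fvs.dim Q \<le> 2"
    and "f \<noteq> 0" and A: "card A = 2" "A \<subseteq> parallel_lines (flat a P) f"
      "A \<subseteq> parallel_lines (flat b Q) f"
  shows "Q \<subseteq> P"
proof -
  obtain x1 x2 where x: "x1 \<in> flat a P" "x2 \<in> flat a P" "affine_line x1 f \<noteq> affine_line x2 f"
    "A = {affine_line x1 f, affine_line x2 f}"
    using two_parallel_linesE[OF A(1,2)] by blast
  have in_flat_Q: "x \<in> flat b Q" if x: "affine_line x f \<in> A" for x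
  proof -
    obtain z where "z \<in> flat b Q" "affine_line x f = affine_line z f"
      using x A(3) by (auto simp: parallel_lines_def)
    then show ?thesis
      using affine_line_subset_flat[OF Q(1,2)] base_mem_affine_line by blast
  qed
  define g where "g = x2 - x1"
  have "x1 \<in> flat b Q" "x2 \<in> flat b Q"
    using in_flat_Q x(4) by auto
  then have "g \<in> P" "g \<in> Q"
    unfolding g_def using diff_mem_flat P(1) Q(1) x(1,2) by auto
  have "g \<notin> fvs.span {f}"
    unfolding g_def using diff_notin_span_if_affine_line_neq[OF x(3)] .
  then have "g \<noteq> f" "fvs.independent {g, f}"
    using \<open>f \<noteq> 0\<close> fvs.span_base[of f "{f}"] by (auto simp: fvs.independent_insert)
  then have "Q \<subseteq> fvs.span {g, f}"
    using \<open>g \<in> Q\<close> Q by (intro fvs.card_ge_dim_independent) auto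
  also have "\<dots> \<subseteq> P"
    using \<open>g \<in> P\<close> P by (simp add: fvs.span_minimal)
  finally show ?thesis .
qed

definition CL_weight ::
    "('n::finite \<Rightarrow> 'k::{finite,field}) set set \<Rightarrow> (('n \<Rightarrow> 'k) \<Rightarrow> real) \<Rightarrow> bool" where
  "CL_weight L y \<longleftrightarrow> (\<forall>l\<in>affine_lines. (if l \<in> L then 1 else 0) = (\<Sum>P\<in>l. y P))"

lemma is_CL_line_class_iff: "is_CL_line_class L \<longleftrightarrow> L \<subseteq> affine_lines \<and> (\<exists>y. CL_weight L y)"
  by (simp add: is_CL_line_class_def CL_weight_def)

lemma card_CL_parallel_lines:
  fixes F :: "('n::finite \<Rightarrow> 'k::{finite,field}) set"
  assumes "CL_weight L y" "d \<noteq> 0" "\<And>p. p \<in> F \<Longrightarrow> affine_line p d \<subseteq> F"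
  shows "real (card (L \<inter> parallel_lines F d)) = sum y F"
proof -
  have "real (card (L \<inter> parallel_lines F d)) = (\<Sum>l\<in>parallel_lines F d. if l \<in> L then 1 else 0)"
    by (simp add: sum.If_cases Int_commute)
  also have "\<dots> = (\<Sum>l\<in>parallel_lines F d. sum y l)"
  proof (rule sum.cong[OF refl])
    fix l assume "l \<in> parallel_lines F d"
    then have "l \<in> affine_lines"
      using assms(2) affine_line_in_affine_lines by (auto simp: parallel_lines_def)
    then show "(if l \<in> L then 1 else 0) = sum y l"
      using assms(1) by (simp add: CL_weight_def)
  qed
  also have "\<dots> = sum y F"
    using sum_over_parallel_lines assms(3) by blast
  finally show ?thesis .
qed

lemma CL_parameter_eq_card_parallel_class:
  fixes L :: "('n::finite \<Rightarrow> 'k::{finite,field}) set set"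
  assumes "L \<subseteq> affine_lines" "CL_weight L y" "v \<noteq> 0"
  shows "CL_parameter L = real (card (L \<inter> parallel_lines UNIV v))"
proof -
  define q where "q = CARD('k)"
  define c where "c = card (L \<inter> parallel_lines UNIV v)"
  have class_card: "card {l\<in>L. l \<in> parallel_lines UNIV w} = c" if "w \<noteq> 0" for w
    using card_CL_parallel_lines[OF assms(2) that, of UNIV]
      card_CL_parallel_lines[OF assms(2,3), of UNIV]
    by (simp add: c_def Int_def)
  have line_directions: "card {w \<in> UNIV - {0}. l \<in> parallel_lines UNIV w} = q - 1"
    if l: "l \<in> L" for l
  proof -
    obtain p d where "d \<noteq> 0" "l = affine_line p d"
      using l assms(1) affine_linesE by blast
    then show ?thesis
      using card_directions_of_affine_line[of d p] by (simp add: q_def conj_commute)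
  qed
  have "finite L"
    by (rule finite_subset[OF subset_UNIV]) simp
  then have "(\<Sum>w\<in>UNIV - {0}. card {l\<in>L. l \<in> parallel_lines UNIV w}) = (q - 1) * card L"
    using line_directions by (intro sum_multicount) auto
  moreover have
    "(\<Sum>w\<in>UNIV - {0}. card {l\<in>L. l \<in> parallel_lines UNIV w}) = c * (q ^ CARD('n) - 1)"
    using class_card by (simp add: card_Diff_subset card_fun q_def)
  ultimately have counts: "card L * (q - 1) = c * (q ^ CARD('n) - 1)"
    by (simp add: mult.commute)
  have "2 \<le> q"
    using card_mono[of UNIV "{0::'k, 1}"] by (simp add: q_def)
  moreover have "q \<le> q ^ CARD('n)"
    using \<open>2 \<le> q\<close> by (simp add: self_le_power)
  ultimately have "real (card L) * (real q - 1) = real c * (real q ^ CARD('n) - 1)"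
    using arg_cong[OF counts, of real] by (simp add: of_nat_diff)
  moreover have "real q ^ CARD('n) \<noteq> 1"
    using \<open>2 \<le> q\<close> \<open>q \<le> q ^ CARD('n)\<close> of_nat_eq_1_iff[of "q ^ CARD('n)"] by simp
  ultimately show ?thesis
    by (simp add: CL_parameter_def q_def c_def)
qed

definition flat_contains_lines ::
    "('n \<Rightarrow> 'k::field) set set \<Rightarrow> ('n \<Rightarrow> 'k) \<Rightarrow> ('n \<Rightarrow> 'k) set \<Rightarrow> bool" where
  "flat_contains_lines L p W \<longleftrightarrow>
     (\<forall>w\<in>W. w \<noteq> 0 \<longrightarrow> L \<inter> parallel_lines UNIV w \<subseteq> parallel_lines (flat p W) w)"

lemma flat_contains_lines_UNIV: "flat_contains_lines L p UNIV"
  by (simp add: flat_contains_lines_def flat_UNIV)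

lemma CL_flat_contains_lines:
  fixes L :: "('n::finite \<Rightarrow> 'k::{finite,field}) set set"
  assumes y: "CL_weight L y" and W: "fvs.subspace W" "d \<in> W" "d \<noteq> 0"
    and inside: "L \<inter> parallel_lines UNIV d \<subseteq> parallel_lines (flat p W) d"
  shows "flat_contains_lines L p W"
  unfolding flat_contains_lines_def
proof (intro ballI impI)
  fix w assume "w \<in> W" "w \<noteq> 0"
  define F where "F = flat p W"
  have count: "real (card (L \<inter> parallel_lines G v)) = sum y G"
    if "v \<in> W" "v \<noteq> 0" "G = F \<or> G = UNIV" for v G
    using that W(1) affine_line_subset_flat card_CL_parallel_lines[OF y \<open>v \<noteq> 0\<close>, of G]
    unfolding F_def by blast
  have "L \<inter> parallel_lines F d = L \<inter> parallel_lines UNIV d"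
    using inside parallel_lines_mono[of F UNIV d] unfolding F_def by blast
  then have "card (L \<inter> parallel_lines F w) = card (L \<inter> parallel_lines UNIV w)"
    using count[of d F] count[of d UNIV] count[of w F] count[of w UNIV] W \<open>w \<in> W\<close> \<open>w \<noteq> 0\<close>
    by simp
  then have "L \<inter> parallel_lines F w = L \<inter> parallel_lines UNIV w"
    using parallel_lines_mono[of F UNIV w] by (intro card_subset_eq) auto
  then show "L \<inter> parallel_lines UNIV w \<subseteq> parallel_lines (flat p W) w"
    unfolding F_def by blast
qed

lemma CL_flat_contains_lines_mono:
  fixes L :: "('n::finite \<Rightarrow> 'k::{finite,field}) set set"
  assumes y: "CL_weight L y" and "flat_contains_lines L p W" "d \<in> W" "d \<noteq> 0"
    and "fvs.subspace W'" "W \<subseteq> W'"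
  shows "flat_contains_lines L p W'"
proof -
  have "L \<inter> parallel_lines UNIV d \<subseteq> parallel_lines (flat p W) d"
    using assms(2-4) by (simp add: flat_contains_lines_def)
  also have "\<dots> \<subseteq> parallel_lines (flat p W') d"
    by (intro parallel_lines_mono flat_mono assms(6))
  finally show ?thesis
    using CL_flat_contains_lines[OF y assms(5)] assms(3,4,6) by blast
qed

lemma CL_plane_of_parallel_pair:
  fixes L :: "('n::finite \<Rightarrow> 'k::{finite,field}) set set"
  assumes y: "CL_weight L y" and W: "fvs.subspace W" "d \<in> W" "d \<noteq> 0"
    and two: "card (L \<inter> parallel_lines UNIV d) = 2"
    and contains: "flat_contains_lines L p W"
  obtains a P
    where "fvs.subspace P" "fvs.dim P = 2" "d \<in> P" "P \<subseteq> W" "flat_contains_lines L a P"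
proof -
  have "L \<inter> parallel_lines UNIV d \<subseteq> parallel_lines (flat p W) d"
    using contains W(2,3) by (simp add: flat_contains_lines_def)
  then obtain a b where ab: "a \<in> flat p W" "b \<in> flat p W" "affine_line a d \<noteq> affine_line b d"
    "L \<inter> parallel_lines UNIV d = {affine_line a d, affine_line b d}"
    using two_parallel_linesE[OF two] by blast
  define P where "P = fvs.span {b - a, d}"
  have "b - a \<notin> fvs.span {d}"
    using diff_notin_span_if_affine_line_neq[OF ab(3)] .
  then have "fvs.dim P = 2"
    using W(3) by (simp add: P_def fvs.dim_insert)
  have "d \<in> P"
    by (simp add: P_def fvs.span_base)
  have "P \<subseteq> W"
    unfolding P_def using W(1,2) diff_mem_flat[OF W(1) ab(1,2)] by (simp add: fvs.span_minimal)
  have "a \<in> flat a P"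
    using base_mem_flat[OF fvs.subspace_span] by (simp add: P_def)
  moreover have "b \<in> flat a P"
    using add_mem_flat[of "b - a" P a] by (simp add: P_def fvs.span_base)
  ultimately have "L \<inter> parallel_lines UNIV d \<subseteq> parallel_lines (flat a P) d"
    unfolding ab(4) by (simp add: affine_line_in_parallel_lines)
  then have "flat_contains_lines L a P"
    using CL_flat_contains_lines[OF y _ \<open>d \<in> P\<close> W(3)] by (simp add: P_def)
  moreover have "fvs.subspace P"
    by (simp add: P_def)
  ultimately show ?thesis
    using that \<open>fvs.dim P = 2\<close> \<open>d \<in> P\<close> \<open>P \<subseteq> W\<close> by blast
qed

lemma CL_plane_through_direction:
  fixes L :: "('n::finite \<Rightarrow> 'k::{finite,field}) set set"
  assumes y: "CL_weight L y" and two: "\<And>v. v \<noteq> 0 \<Longrightarrow> card (L \<inter> parallel_lines UNIV v) = 2"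
    and W0: "fvs.subspace W0" "fvs.dim W0 = 2" "d \<in> W0" "d \<noteq> 0" "flat_contains_lines L p W0"
    and "e \<notin> W0"
  obtains r W2 f where "fvs.subspace W2" "fvs.dim W2 = 2" "flat_contains_lines L r W2" "e \<in> W2"
    "f \<in> W0" "f \<in> W2" "f \<noteq> 0"
proof -
  define W1 where "W1 = fvs.span (insert e W0)"
  have W1: "fvs.subspace W1" "W0 \<subseteq> W1" "e \<in> W1" "fvs.dim W1 = 3" "e \<noteq> 0"
    using \<open>e \<notin> W0\<close> W0(1,2) fvs.span_superset[of "insert e W0"] fvs.subspace_0
    by (auto simp: W1_def fvs.dim_insert fvs.span_subspace[OF subset_refl fvs.span_superset W0(1)])
  have "flat_contains_lines L p W1"
    using CL_flat_contains_lines_mono[OF y W0(5,3,4) W1(1,2)] .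
  then obtain r W2 where W2: "fvs.subspace W2" "fvs.dim W2 = 2" "e \<in> W2" "W2 \<subseteq> W1"
    "flat_contains_lines L r W2"
    using CL_plane_of_parallel_pair[OF y W1(1,3,5) two[OF W1(5)]] by metis
  moreover obtain f where "f \<in> W0" "f \<in> W2" "f \<noteq> 0"
    using fvs.subspace_Int_nonzero[OF W0(1) W2(1) W1(1,2) W2(4)] W0(2) W1(4) W2(2) by auto
  ultimately show ?thesis
    using that by blast
qed

lemma CL_planes_sharing_direction:
  fixes L :: "('n::finite \<Rightarrow> 'k::{finite,field}) set set"
  assumes "card (L \<inter> parallel_lines UNIV f) = 2" "f \<noteq> 0"
    and P: "fvs.subspace P" "f \<in> P" "flat_contains_lines L a P"
    and Q: "fvs.subspace Q" "f \<in> Q" "fvs.dim Q \<le> 2" "flat_contains_lines L b Q"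
  shows "Q \<subseteq> P"
proof (rule subspace_subset_if_flats_share_parallel_lines[OF P(1,2) Q(1-3) assms(2,1)])
  show "L \<inter> parallel_lines UNIV f \<subseteq> parallel_lines (flat a P) f"
    and "L \<inter> parallel_lines UNIV f \<subseteq> parallel_lines (flat b Q) f"
    using assms(2) P(2,3) Q(2,4) by (simp_all add: flat_contains_lines_def)
qed

theorem theorem6p8:
  fixes L :: "('n::finite \<Rightarrow> 'k::{finite,field}) set set"
  assumes "card (UNIV :: 'n set) \<ge> 3"
      and "is_CL_line_class L"
  shows "CL_parameter L \<noteq> 2"
proof
  assume "CL_parameter L = 2"
  obtain y where "L \<subseteq> affine_lines" and y: "CL_weight L y"
    using assms(2) by (auto simp: is_CL_line_class_iff)
  then have two: "card (L \<inter> parallel_lines UNIV v) = 2" if "v \<noteq> 0" for v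
    using CL_parameter_eq_card_parallel_class[of L y v] that \<open>CL_parameter L = 2\<close> by linarith
  obtain p W0 where W0: "fvs.subspace W0" "fvs.dim W0 = 2" "1 \<in> W0" "flat_contains_lines L p W0"
    using CL_plane_of_parallel_pair[OF y fvs.subspace_UNIV UNIV_I one_neq_zero two[OF one_neq_zero]
        flat_contains_lines_UNIV]
    by metis
  have "W0 \<noteq> UNIV"
    using W0(2) assms(1) fvs_dim_UNIV[where 'n='n and 'k='k] by auto
  then obtain e where "e \<notin> W0"
    by blast
  then obtain r W2 f where W2: "fvs.subspace W2" "fvs.dim W2 = 2" "flat_contains_lines L r W2" "e \<in> W2"
    and f: "f \<in> W0" "f \<in> W2" "f \<noteq> 0"
    using CL_plane_through_direction[OF y two W0(1-3) one_neq_zero W0(4)] by metis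
  then have "W2 \<subseteq> W0"
    using CL_planes_sharing_direction[OF two[OF f(3)] f(3) W0(1) f(1) W0(4) W2(1) f(2)] by simp
  then show False
    using \<open>e \<in> W2\<close> \<open>e \<notin> W0\<close> by blast
qed

end
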